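(* Let $D=\{\mathbf{v}_1,\dots,\mathbf{v}_q\}\subset\mathbb{R}^{d}$ with all coordinates in $[-\sqrt{2/d},\sqrt{2/d}]$, let $\eta>0$ with $2/\eta$ an integer, and let $D_Q$ be the randomized quantization of $D$ described in the context. Then for each $i\in[d]$, $\mathbb{E}[w(D_Q,i)]=\sqrt{d/2}\,w(D,i)$, and with probability at least $1-2d\exp(-q/4)$, $\left|\frac1q\sqrt{\tfrac2d}\,w(D_Q,i)-\frac1q w(D,i)\right|\le\eta.$
   Context: $S=\{-1,-1+\eta,\dots,1-\eta,1\}$. For $x\in[-1,1]$ let $k=\lfloor (x+1)/\eta\rfloor$ and let the random quantizer be $Q(x)=-1+k\eta$ with probability $\frac{(k+1)\eta-1-x}{\eta}$ and $Q(x)=-1+(k+1)\eta$ with probability $\frac{x+1-k\eta}{\eta}$, applied independently to each coordinate. $D_Q=\{\tilde v_j=Q(\sqrt{d/2}\,\mathbf{v}_j)\}_{j=1}^q$, $w(D_Q,i)=\sum_{j=1}^q\tilde v_{ji}$ and $w(D,i)=\sum_{j=1}^q v_{ji}$. *)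

theory Defs
  imports "HOL-Probability.Probability"
begin

text \<open>Randomized quantizer onto the grid S = {-1, -1+eta, ..., 1} for x in [-1,1]:
  with k = floor((x+1)/eta), output -1 + k*eta with probability ((k+1)eta - 1 - x)/eta
  and -1 + (k+1)*eta with probability (x + 1 - k eta)/eta.\<close>
definition quant_pmf :: "real \<Rightarrow> real \<Rightarrow> real pmf" where
  "quant_pmf eta x =
     (let k = real_of_int \<lfloor>(x + 1) / eta\<rfloor> in
      map_pmf (\<lambda>b. if b then -1 + (k + 1) * eta else -1 + k * eta)
        (bernoulli_pmf ((x + 1 - k * eta) / eta)))"

text \<open>Distribution of the quantized dataset D_Q: the data set D = {v_1..v_q} in R^d is
  given as v j i (j < q vector index, i < d coordinate); the quantized data set is a
  function on {..<q} x {..<d}, each entry quantized independently.\<close>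
definition quantized_data :: "real \<Rightarrow> nat \<Rightarrow> nat \<Rightarrow> (nat \<Rightarrow> nat \<Rightarrow> real) \<Rightarrow> (nat \<times> nat \<Rightarrow> real) pmf" where
  "quantized_data eta q d v =
     Pi_pmf ({..<q} \<times> {..<d}) 0 (\<lambda>(j, i). quant_pmf eta (sqrt (real d / 2) * v j i))"

definition w_data :: "nat \<Rightarrow> (nat \<Rightarrow> nat \<Rightarrow> real) \<Rightarrow> nat \<Rightarrow> real" where
  "w_data q v i = (\<Sum>j<q. v j i)"

definition w_quant :: "nat \<Rightarrow> (nat \<times> nat \<Rightarrow> real) \<Rightarrow> nat \<Rightarrow> real" where
  "w_quant q vt i = (\<Sum>j<q. vt (j, i))"

end

theory Submission
  imports Defs
begin

(* Each quantized entry rounds sqrt(d/2) v_ji to one of the two neighbouring grid points L, L + eta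
   with the probabilities that make it unbiased, so the expectation claim is linearity.
   For a fixed coordinate i the rounding errors of the q entries are independent, centred and
   confined to intervals of width eta, so by Hoeffding's inequality their sum reaches
   q eta sqrt(d/2) with probability at most 2 exp(-q d); a union bound over the d coordinates
   gives 2 d exp(-q d) <= 2 d exp(-q/4). *)

definition quant_lower :: "real \<Rightarrow> real \<Rightarrow> real" where
  "quant_lower eta x = -1 + real_of_int \<lfloor>(x + 1) / eta\<rfloor> * eta"

lemma quant_lower_le:
  assumes "eta > 0"
  shows "quant_lower eta x \<le> x"
proof -
  have "real_of_int \<lfloor>(x + 1) / eta\<rfloor> * eta \<le> x + 1"
    using assms by (simp add: pos_le_divide_eq[symmetric])
  then show ?thesis unfolding quant_lower_def by simp
qed

lemma less_quant_lower_add: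
  assumes "eta > 0"
  shows "x < quant_lower eta x + eta"
proof -
  have "x + 1 < (real_of_int \<lfloor>(x + 1) / eta\<rfloor> + 1) * eta"
    using assms by (simp add: pos_divide_less_eq[symmetric])
  then show ?thesis unfolding quant_lower_def by (simp add: algebra_simps)
qed

lemma quant_pmf_eq:
  "quant_pmf eta x =
     map_pmf (\<lambda>b. if b then quant_lower eta x + eta else quant_lower eta x)
       (bernoulli_pmf ((x - quant_lower eta x) / eta))"
  unfolding quant_pmf_def quant_lower_def Let_def by (simp add: algebra_simps cong: if_cong)

lemma set_pmf_quant_pmf:
  "set_pmf (quant_pmf eta x) \<subseteq> {quant_lower eta x, quant_lower eta x + eta}"
  unfolding quant_pmf_eq by auto

lemma expectation_quant_pmf:
  assumes "eta > 0"
  shows "measure_pmf.expectation (quant_pmf eta x) (\<lambda>y. y) = x"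
proof -
  define L where "L = quant_lower eta x"
  define p where "p = (x - L) / eta"
  have "0 \<le> p" "p \<le> 1"
    using quant_lower_le[OF assms, of x] less_quant_lower_add[OF assms, of x]
    unfolding p_def L_def by (simp_all add: assms)
  then have "measure_pmf.expectation (quant_pmf eta x) (\<lambda>y. y) = (L + eta) * p + L * (1 - p)"
    unfolding quant_pmf_eq integral_map_pmf L_def[symmetric] p_def[symmetric] by simp
  also have "\<dots> = x"
    using assms unfolding p_def by (simp add: field_simps)
  finally show ?thesis .
qed

lemma map_pmf_quantized_data_component:
  assumes "j < q" "i < d"
  shows "map_pmf (\<lambda>vt. vt (j, i)) (quantized_data eta q d v)
           = quant_pmf eta (sqrt (real d / 2) * v j i)"
  unfolding quantized_data_def using assms by (subst Pi_pmf_component) auto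

lemma set_pmf_quantized_data_component:
  assumes "vt \<in> set_pmf (quantized_data eta q d v)" "j < q" "i < d"
  shows "vt (j, i) \<in> set_pmf (quant_pmf eta (sqrt (real d / 2) * v j i))"
  using assms(1) map_pmf_quantized_data_component[OF assms(2,3), of eta v, symmetric]
  by (simp add: set_map_pmf)

lemma
  assumes "eta > 0" "j < q" "i < d"
  shows integrable_quantized_data_component:
      "integrable (measure_pmf (quantized_data eta q d v)) (\<lambda>vt. vt (j, i))"
    and expectation_quantized_data_component:
      "measure_pmf.expectation (quantized_data eta q d v) (\<lambda>vt. vt (j, i))
         = sqrt (real d / 2) * v j i"
proof -
  let ?Q = "quant_pmf eta (sqrt (real d / 2) * v j i)"
  have "finite (set_pmf ?Q)"
    using set_pmf_quant_pmf by (rule finite_subset) simp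
  then have "integrable (measure_pmf ?Q) (\<lambda>y. y)"
    by (rule integrable_measure_pmf_finite)
  then show "integrable (measure_pmf (quantized_data eta q d v)) (\<lambda>vt. vt (j, i))"
    by (simp flip: map_pmf_quantized_data_component[OF assms(2,3)])
  have "measure_pmf.expectation (quantized_data eta q d v) (\<lambda>vt. vt (j, i))
          = measure_pmf.expectation (map_pmf (\<lambda>vt. vt (j, i)) (quantized_data eta q d v)) (\<lambda>y. y)"
    by simp
  then show "measure_pmf.expectation (quantized_data eta q d v) (\<lambda>vt. vt (j, i))
          = sqrt (real d / 2) * v j i"
    by (simp add: map_pmf_quantized_data_component[OF assms(2,3)] expectation_quant_pmf[OF assms(1)])
qed

lemma expectation_w_quant:
  assumes "eta > 0" "i < d"
  shows "measure_pmf.expectation (quantized_data eta q d v) (\<lambda>vt. w_quant q vt i)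
           = sqrt (real d / 2) * w_data q v i"
  using assms
  by (simp add: w_quant_def w_data_def sum_distrib_left integrable_quantized_data_component
      expectation_quantized_data_component)

lemma sum_coordinate_slice:
  "(\<Sum>p\<in>{..<q} \<times> {i}. f p) = (\<Sum>j<q. f (j, i))"
proof -
  have "{..<q} \<times> {i} = (\<lambda>j. (j, i)) ` {..<q}" by auto
  moreover have "inj_on (\<lambda>j. (j, i)) {..<q}" by (auto simp: inj_on_def)
  ultimately show ?thesis by (simp add: sum.reindex)
qed

lemma prob_w_quant_deviation_ge:
  assumes eta: "eta > 0" and i: "i < d" and t: "t \<ge> 0"
  shows "measure_pmf.prob (quantized_data eta q d v)
           {vt. t * real q * eta \<le> \<bar>w_quant q vt i - sqrt (real d / 2) * w_data q v i\<bar>}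
         \<le> 2 * exp (- 2 * real q * t\<^sup>2)"
proof (cases "q = 0")
  case True
  then show ?thesis
    using measure_pmf.prob_le_1[of "quantized_data eta q d v"] by simp
next
  case False
  define P where "P = quantized_data eta q d v"
  define c where "c = sqrt (real d / 2)"
  define J where "J = {..<q} \<times> {i}"
  define X where "X = (\<lambda>p (vt :: nat \<times> nat \<Rightarrow> real). vt p - c * v (fst p) (snd p))"
  define a where "a = (\<lambda>p. quant_lower eta (c * v (fst p) (snd p)) - c * v (fst p) (snd p))"
  have J: "finite J" "J \<subseteq> {..<q} \<times> {..<d}"
    using i unfolding J_def by auto
  have "prob_space.indep_vars (measure_pmf P) (\<lambda>_. count_space UNIV) (\<lambda>p vt. vt p)
          ({..<q} \<times> {..<d})"
    unfolding P_def quantized_data_def by (rule indep_vars_Pi_pmf) simp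
  then have "prob_space.indep_vars (measure_pmf P) (\<lambda>_. count_space UNIV) (\<lambda>p vt. vt p) J"
    using J(2) by (rule prob_space.indep_vars_subset[OF prob_space_measure_pmf])
  then have "prob_space.indep_vars (measure_pmf P) (\<lambda>_. borel)
               (\<lambda>p vt. (\<lambda>y. y - c * v (fst p) (snd p)) (vt p)) J"
    by (rule prob_space.indep_vars_compose2[OF prob_space_measure_pmf]) simp
  then have indep: "prob_space.indep_vars (measure_pmf P) (\<lambda>_. borel) X J"
    unfolding X_def .
  have bounded: "AE vt in measure_pmf P. X p vt \<in> {a p..a p + eta}" if "p \<in> J" for p
  proof (rule AE_pmfI)
    fix vt assume "vt \<in> set_pmf P"
    then have "vt p \<in> set_pmf (quant_pmf eta (c * v (fst p) (snd p)))"
      using that J(2) set_pmf_quantized_data_component[of vt eta q d v "fst p" "snd p"]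
      unfolding P_def c_def by auto
    then show "X p vt \<in> {a p..a p + eta}"
      using set_pmf_quant_pmf[of eta "c * v (fst p) (snd p)"] eta unfolding X_def a_def by auto
  qed
  have centred: "(\<Sum>p\<in>J. measure_pmf.expectation P (X p)) = 0"
    using J(2) eta
    by (intro sum.neutral) (auto simp: X_def P_def c_def integrable_quantized_data_component
        expectation_quantized_data_component)
  interpret Hoeffding_ineq "measure_pmf P" J X a "\<lambda>p. a p + eta" 0
    by unfold_locales (use J(1) indep bounded centred in auto)
  have widths: "(\<Sum>p\<in>J. (a p + eta - a p)\<^sup>2) = real q * eta\<^sup>2"
    unfolding J_def by simp
  have "{vt \<in> space (measure_pmf P). t * real q * eta \<le> \<bar>(\<Sum>p\<in>J. X p vt) - 0\<bar>}
          = {vt. t * real q * eta \<le> \<bar>w_quant q vt i - c * w_data q v i\<bar>}"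
    by (simp add: J_def X_def sum_coordinate_slice w_quant_def w_data_def sum_subtractf
        sum_distrib_left)
  moreover have "measure_pmf.prob P {vt \<in> space (measure_pmf P).
                   t * real q * eta \<le> \<bar>(\<Sum>p\<in>J. X p vt) - 0\<bar>}
                 \<le> 2 * exp (- 2 * (t * real q * eta)\<^sup>2 / (\<Sum>p\<in>J. (a p + eta - a p)\<^sup>2))"
    by (rule Hoeffding_ineq_abs_ge) (use False eta t widths in auto)
  moreover have "- 2 * (t * real q * eta)\<^sup>2 / (\<Sum>p\<in>J. (a p + eta - a p)\<^sup>2) = - 2 * real q * t\<^sup>2"
    unfolding widths using False eta by (simp add: field_simps power2_eq_square)
  ultimately show ?thesis unfolding P_def c_def by simp
qed

lemma prob_quantized_mean_close:
  assumes d: "d \<ge> 1" and eta: "eta > 0"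
  shows "measure_pmf.prob (quantized_data eta q d v)
           {vt. \<forall>i<d. \<bar>(1 / real q) * sqrt (2 / real d) * w_quant q vt i
                        - (1 / real q) * w_data q v i\<bar> \<le> eta}
         \<ge> 1 - 2 * real d * exp (- real q / 4)"
proof -
  define P where "P = quantized_data eta q d v"
  define c where "c = sqrt (real d / 2)"
  define G where "G = {vt. \<forall>i<d. \<bar>(1 / real q) * sqrt (2 / real d) * w_quant q vt i
                        - (1 / real q) * w_data q v i\<bar> \<le> eta}"
  define Bad where "Bad = (\<lambda>i. {vt. c * real q * eta \<le> \<bar>w_quant q vt i - c * w_data q v i\<bar>})"
  have c: "c\<^sup>2 = real d / 2" "sqrt (2 / real d) * c = 1"
    using d unfolding c_def by (simp_all add: real_sqrt_mult[symmetric])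
  have close: "\<bar>(1 / real q) * sqrt (2 / real d) * w - (1 / real q) * u\<bar> \<le> eta"
    if "\<bar>w - c * u\<bar> < c * real q * eta" for w u
  proof (cases "q = 0")
    case False
    have "(1 / real q) * s * w - (1 / real q) * u = s / real q * (w - c * u)"
      if "s * c = 1" for s
      using that by (simp add: algebra_simps flip: mult.assoc)
    then have "\<bar>(1 / real q) * sqrt (2 / real d) * w - (1 / real q) * u\<bar>
            = sqrt (2 / real d) / real q * \<bar>w - c * u\<bar>"
      using c(2) by (simp add: abs_mult)
    also have "\<dots> \<le> sqrt (2 / real d) / real q * (c * real q * eta)"
      using that by (intro mult_left_mono) auto
    also have "\<dots> = eta"
      using False c(2) by (simp add: field_simps)
    finally show ?thesis .
  qed (use eta in simp)
  have "UNIV - G \<subseteq> (\<Union>i<d. Bad i)"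
    unfolding G_def Bad_def using close by (force simp: not_le)
  then have "measure_pmf.prob P (UNIV - G) \<le> measure_pmf.prob P (\<Union>i<d. Bad i)"
    by (intro measure_pmf.finite_measure_mono) auto
  also have "\<dots> \<le> (\<Sum>i<d. measure_pmf.prob P (Bad i))"
    by (intro measure_pmf.finite_measure_subadditive_finite) auto
  also have "\<dots> \<le> (\<Sum>i<d. 2 * exp (- 2 * real q * c\<^sup>2))"
    unfolding P_def Bad_def c_def
    by (intro sum_mono prob_w_quant_deviation_ge eta) auto
  also have "\<dots> = 2 * real d * exp (- real q * real d)"
    using c(1) by simp
  also have "\<dots> \<le> 2 * real d * exp (- real q / 4)"
  proof -
    have "real q * 1 \<le> real q * real d"
      using d by (intro mult_left_mono) auto
    then show ?thesis by (intro mult_left_mono) auto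
  qed
  finally have "measure_pmf.prob P (UNIV - G) \<le> 2 * real d * exp (- real q / 4)" .
  then show ?thesis
    using measure_pmf.prob_compl[of G P] unfolding P_def G_def by simp
qed

theorem lemma2:
  fixes q d :: nat and v :: "nat \<Rightarrow> nat \<Rightarrow> real" and eta :: real
  assumes "d \<ge> 1"
    and "\<And>j i. j < q \<Longrightarrow> i < d \<Longrightarrow> \<bar>v j i\<bar> \<le> sqrt (2 / real d)"
    and "eta > 0"
    and "\<exists>n::nat. 2 / eta = real n"
  shows "(\<forall>i<d. measure_pmf.expectation (quantized_data eta q d v) (\<lambda>vt. w_quant q vt i)
                 = sqrt (real d / 2) * w_data q v i)
       \<and> measure_pmf.prob (quantized_data eta q d v)
           {vt. \<forall>i<d. \<bar>(1 / real q) * sqrt (2 / real d) * w_quant q vt i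
                        - (1 / real q) * w_data q v i\<bar> \<le> eta}
         \<ge> 1 - 2 * real d * exp (- real q / 4)"
  (* The bound on v and the integrality of 2 / eta only ensure that the quantized values lie in
     the grid S; neither claim depends on them. *)
  using expectation_w_quant[OF assms(3)] prob_quantized_mean_close[OF assms(1,3)] by blast

end
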